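(* Let $\mathbf{X}\sim\mathcal{N}(0,\operatorname{diag}(\lambda_1,\dots,\lambda_M))$ with all $\lambda_i>0$. Fix $\theta\ge0$, set $\alpha_i=\big(\sqrt{\lambda_i^2+\theta^2}-\theta\big)/\lambda_i$, let $\mathbf{U}\sim\mathcal{N}(0,\mathbf{I})$ be independent of $\mathbf{X}$, and define $Z_i=\alpha_iX_i+\sqrt{1-\alpha_i^2}\sqrt{\lambda_i}\,U_i$ and $\hat{\mathbf{X}}=\mathbf{Z}$. Let $D=\mathbb{E}[\|\mathbf{X}-\hat{\mathbf{X}}\|^2]$. Then $\hat{\mathbf{X}}\sim\mathbf{X}$ and $$I[\mathbf{X},\hat{\mathbf{X}}]=\inf\Big\{I[\mathbf{X},\tilde{\mathbf{X}}]\;:\;\tilde{\mathbf{X}}\sim\mathbf{X},\ \mathbb{E}[\|\mathbf{X}-\tilde{\mathbf{X}}\|^2]\le D\Big\},$$ where the infimum is over all random vectors $\tilde{\mathbf{X}}$ jointly distributed with $\mathbf{X}$.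
   Context: $\tilde{\mathbf{X}}\sim\mathbf{X}$ means $\tilde{\mathbf{X}}$ has the same marginal distribution as $\mathbf{X}$. Logarithms are base 2. *)

theory Defs
  imports "HOL-Probability.Probability"
begin

text \<open>Random vectors indexed by a finite type 'i (the coordinates 1..M),
  valued in the product space of copies of the real line.\<close>
abbreviation vec_space :: "('i::finite \<Rightarrow> real) measure" where
  "vec_space \<equiv> PiM UNIV (\<lambda>_. borel)"

text \<open>Law of N(0, diag(lam)): product of centred normals with variances lam i
  (normal_density takes the standard deviation).\<close>
definition gauss_diag :: "('i::finite \<Rightarrow> real) \<Rightarrow> ('i \<Rightarrow> real) measure" where
  "gauss_diag lam = PiM UNIV (\<lambda>i. density lborel (normal_density 0 (sqrt (lam i))))"

text \<open>Relative entropy D(P || Q) in bits, with values in [0, infinity]: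
  it is infinite when P is not absolutely continuous w.r.t. Q, or when the
  log-density is not P-integrable (its negative part is always integrable,
  so non-integrability means divergence to +infinity).\<close>
definition rel_entropy2 :: "'a measure \<Rightarrow> 'a measure \<Rightarrow> ennreal" where
  "rel_entropy2 P Q =
     (if absolutely_continuous Q P \<and> integrable P (entropy_density 2 Q P)
      then ennreal (KL_divergence 2 Q P) else \<infinity>)"

definition mutual_info_joint :: "'a measure \<Rightarrow> 'b measure \<Rightarrow> ('a \<times> 'b) measure \<Rightarrow> ennreal" where
  "mutual_info_joint S T J = rel_entropy2 J (distr J S fst \<Otimes>\<^sub>M distr J T snd)"

definition sq_distortion :: "(('i::finite \<Rightarrow> real) \<times> ('i \<Rightarrow> real)) measure \<Rightarrow> ennreal" where
  "sq_distortion J = (\<integral>\<^sup>+ p. ennreal (\<Sum>i\<in>UNIV. (fst p i - snd p i)\<^sup>2) \<partial>J)"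

end

theory Submission
  imports Defs
begin

text \<open>Conditionally on \<open>X = x\<close>, the test channel outputs \<open>N(\<rho> x, (1 - \<rho>\<^sup>2) \<lambda>)\<close> coordinatewise,
  so the joint law of \<open>(X, Z)\<close> has a density \<open>G\<close> with respect to \<open>P\<^sub>X \<otimes> P\<^sub>X\<close>.  Coordinatewise,
  \<open>ln G\<close> is a constant plus \<open>a\<^sub>i (x\<^sub>i\<^sup>2 + y\<^sub>i\<^sup>2) - t\<^sub>i (x\<^sub>i - y\<^sub>i)\<^sup>2\<close>, and the choice of \<open>\<alpha>\<^sub>i\<close> makes
  \<open>t\<^sub>i = 1/(4\<theta>)\<close> independent of \<open>i\<close>.  Hence for every coupling \<open>J\<close> of \<open>P\<^sub>X\<close> with itself,
  \<open>E\<^sub>J log G\<close> depends on \<open>J\<close> only through its distortion and decreases with it, while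
  Gibbs' inequality gives \<open>I(J) \<ge> E\<^sub>J log G\<close>, with equality for the test channel.
  For \<open>\<theta> = 0\<close> the channel is the identity, \<open>D = 0\<close>, and every admissible coupling lives on the
  diagonal, a null set of \<open>P\<^sub>X \<otimes> P\<^sub>X\<close>; so all mutual informations involved are infinite.\<close>

section \<open>Products of centred normal laws\<close>

lemma space_vec_space[simp]: "space (vec_space :: ('i::finite \<Rightarrow> real) measure) = UNIV"
  by (auto simp: space_PiM PiE_iff)

lemma sets_gauss_diag[measurable_cong, simp]:
  "sets (gauss_diag lam) = sets (vec_space :: ('i::finite \<Rightarrow> real) measure)"
  unfolding gauss_diag_def by (intro sets_PiM_cong) auto

lemma space_gauss_diag[simp]: "space (gauss_diag lam) = (UNIV :: ('i::finite \<Rightarrow> real) set)"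
  unfolding gauss_diag_def by (auto simp: space_PiM PiE_iff)

lemma prob_space_gauss_diag:
  "(\<And>i. lam i > 0) \<Longrightarrow> prob_space (gauss_diag (lam :: 'i::finite \<Rightarrow> real))"
  unfolding gauss_diag_def by (rule prob_space_PiM) (auto intro: prob_space_normal_density)

lemma measurable_coordinatewise_lincomb[measurable]:
  fixes a b :: "'i::finite \<Rightarrow> real"
  shows "(\<lambda>(x, u). \<lambda>i. a i * x i + b i * u i) \<in> measurable (vec_space \<Otimes>\<^sub>M vec_space) vec_space"
  by (intro measurable_PiM_single') (auto simp: space_PiM case_prod_beta)

lemma PiM_density_lborel:
  fixes f :: "'i::finite \<Rightarrow> real \<Rightarrow> real"
  assumes [measurable]: "\<And>i. f i \<in> borel_measurable borel"
    and ps: "\<And>i. prob_space (density lborel (f i))"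
  shows "PiM UNIV (\<lambda>i. density lborel (f i))
       = density (PiM UNIV (\<lambda>_. lborel)) (\<lambda>x. \<Prod>i\<in>UNIV. ennreal (f i (x i)))"
proof -
  interpret P: product_sigma_finite "\<lambda>i. density lborel (f i)"
    unfolding product_sigma_finite_def using ps prob_space_imp_sigma_finite by blast
  interpret L: product_sigma_finite "\<lambda>_::'i. lborel :: real measure"
    by (simp add: product_sigma_finite_def lborel.sigma_finite_measure_axioms)
  show ?thesis
  proof (rule P.PiM_eqI[symmetric])
    show "sets (density (PiM UNIV (\<lambda>_. lborel)) (\<lambda>x. \<Prod>i\<in>UNIV. ennreal (f i (x i))))
        = sets (PiM UNIV (\<lambda>i. density lborel (f i)))"
      unfolding sets_density by (intro sets_PiM_cong) auto
    fix A assume "\<And>i. i \<in> UNIV \<Longrightarrow> A i \<in> sets (density lborel (f i))"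
    then have A[measurable]: "\<And>i. A i \<in> sets borel" by simp
    have "emeasure (density (PiM UNIV (\<lambda>_. lborel)) (\<lambda>x. \<Prod>i\<in>UNIV. ennreal (f i (x i)))) (PiE UNIV A)
       = (\<integral>\<^sup>+x. (\<Prod>i\<in>UNIV. ennreal (f i (x i))) * indicator (PiE UNIV A) x \<partial>PiM UNIV (\<lambda>_. lborel))"
      by (rule emeasure_density) (auto intro!: sets_PiM_I_finite)
    also have "\<dots> = (\<integral>\<^sup>+x. (\<Prod>i\<in>UNIV. ennreal (f i (x i)) * indicator (A i) (x i)) \<partial>PiM UNIV (\<lambda>_. lborel))"
      by (intro nn_integral_cong) (auto simp: prod.distrib indicator_def PiE_iff prod_zero_iff)
    also have "\<dots> = (\<Prod>i\<in>UNIV. \<integral>\<^sup>+x. ennreal (f i x) * indicator (A i) x \<partial>lborel)"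
      by (rule L.product_nn_integral_prod) (simp, measurable)
    also have "\<dots> = (\<Prod>i\<in>UNIV. emeasure (density lborel (f i)) (A i))"
      by (intro prod.cong refl) (simp add: emeasure_density)
    finally show "emeasure (density (PiM UNIV (\<lambda>_. lborel)) (\<lambda>x. \<Prod>i\<in>UNIV. ennreal (f i (x i)))) (PiE UNIV A)
        = (\<Prod>i\<in>UNIV. emeasure (density lborel (f i)) (A i))" .
  qed simp
qed

lemma gauss_diag_density:
  assumes "\<And>i. lam i > 0"
  shows "gauss_diag lam = density (PiM UNIV (\<lambda>_. lborel))
           (\<lambda>y. \<Prod>i\<in>UNIV. ennreal (normal_density 0 (sqrt (lam i)) (y i)))"
  unfolding gauss_diag_def
  by (rule PiM_density_lborel) (auto intro!: prob_space_normal_density simp: assms)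

lemma distr_std_normal_affine:
  assumes "b > 0"
  shows "distr (density lborel (normal_density 0 1)) borel (\<lambda>v. a + b * v)
       = density lborel (normal_density a b)"
proof -
  interpret N: prob_space "density lborel (normal_density 0 1)"
    by (rule prob_space_normal_density) simp
  have "distributed (density lborel (normal_density 0 1)) lborel (\<lambda>v. v) (normal_density 0 1)"
    unfolding distributed_def by (simp add: distr_id2)
  from N.normal_density_affine[OF this, where \<alpha>=b and \<beta>=a] assms
  have "distr (density lborel (normal_density 0 1)) lborel (\<lambda>v. a + b * v) = density lborel (normal_density a b)"
    unfolding distributed_def by simp
  moreover have "distr (density lborel (normal_density 0 1)) borel (\<lambda>v. a + b * v)
      = distr (density lborel (normal_density 0 1)) lborel (\<lambda>v. a + b * v)"
    by (rule distr_cong) auto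
  ultimately show ?thesis by simp
qed

lemma distr_gauss_diag_affine:
  fixes c b :: "'i::finite \<Rightarrow> real"
  assumes b_pos: "\<And>i. b i > 0"
  shows "distr (gauss_diag (\<lambda>_. 1)) vec_space (\<lambda>u i. c i + b i * u i)
       = PiM UNIV (\<lambda>i. density lborel (normal_density (c i) (b i)))"
proof -
  interpret P: product_sigma_finite "\<lambda>i. density lborel (normal_density (c i) (b i))"
    unfolding product_sigma_finite_def
    using prob_space_normal_density[OF b_pos] prob_space_imp_sigma_finite by blast
  interpret U: product_sigma_finite "\<lambda>i::'i. density lborel (normal_density 0 1)"
    unfolding product_sigma_finite_def
    using prob_space_normal_density[of 1] prob_space_imp_sigma_finite by fastforce
  have std: "gauss_diag (\<lambda>_::'i. 1) = PiM UNIV (\<lambda>i::'i. density lborel (normal_density 0 1))"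
    by (simp add: gauss_diag_def)
  have [measurable]: "(\<lambda>u. \<lambda>i. c i + b i * u i) \<in> measurable (gauss_diag (\<lambda>_::'i. 1)) vec_space"
    unfolding std by (intro measurable_PiM_single') (auto simp: space_PiM)
  show ?thesis
  proof (rule P.PiM_eqI)
    show "sets (distr (gauss_diag (\<lambda>_. 1)) vec_space (\<lambda>u i. c i + b i * u i))
        = sets (PiM UNIV (\<lambda>i. density lborel (normal_density (c i) (b i))))"
      unfolding sets_distr by (intro sets_PiM_cong) auto
    fix A assume "\<And>i. i \<in> UNIV \<Longrightarrow> A i \<in> sets (density lborel (normal_density (c i) (b i)))"
    then have A[measurable]: "\<And>i. A i \<in> sets borel" by simp
    have [measurable]: "(\<lambda>v. c i + b i * v) -` A i \<in> sets borel" for i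
      using measurable_sets[of "\<lambda>v. c i + b i * v" borel borel "A i"] by simp
    have pre: "(\<lambda>u i. c i + b i * u i) -` PiE UNIV A = PiE UNIV (\<lambda>i. (\<lambda>v. c i + b i * v) -` A i)"
      by (auto simp: PiE_iff)
    have "emeasure (distr (gauss_diag (\<lambda>_. 1)) vec_space (\<lambda>u i. c i + b i * u i)) (PiE UNIV A)
        = emeasure (gauss_diag (\<lambda>_. 1)) (PiE UNIV (\<lambda>i. (\<lambda>v. c i + b i * v) -` A i))"
      by (subst emeasure_distr) (auto intro!: sets_PiM_I_finite simp: pre)
    also have "\<dots> = (\<Prod>i\<in>UNIV. emeasure (density lborel (normal_density 0 1)) ((\<lambda>v. c i + b i * v) -` A i))"
      unfolding std by (rule U.emeasure_PiM) auto
    also have "\<dots> = (\<Prod>i\<in>UNIV. emeasure (distr (density lborel (normal_density 0 1)) borel (\<lambda>v. c i + b i * v)) (A i))"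
      by (intro prod.cong refl) (subst emeasure_distr, auto)
    also have "\<dots> = (\<Prod>i\<in>UNIV. emeasure (density lborel (normal_density (c i) (b i))) (A i))"
      by (intro prod.cong refl) (simp add: distr_std_normal_affine b_pos)
    finally show "emeasure (distr (gauss_diag (\<lambda>_. 1)) vec_space (\<lambda>u i. c i + b i * u i)) (PiE UNIV A)
        = (\<Prod>i\<in>UNIV. emeasure (density lborel (normal_density (c i) (b i))) (A i))" .
  qed simp
qed

lemma distr_gauss_diag_component:
  assumes lam_pos: "\<And>i. lam i > 0"
  shows "distr (gauss_diag lam) borel (\<lambda>x. x i) = density lborel (normal_density 0 (sqrt (lam i)))"
proof -
  have "distr (gauss_diag lam) borel (\<lambda>x. x i)
      = distr (gauss_diag lam) (density lborel (normal_density 0 (sqrt (lam i)))) (\<lambda>x. x i)"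
    by (rule distr_cong) auto
  also have "\<dots> = density lborel (normal_density 0 (sqrt (lam i)))"
    unfolding gauss_diag_def
    by (rule distr_PiM_component) (auto intro!: prob_space_normal_density simp: lam_pos)
  finally show ?thesis .
qed

lemma gauss_diag_second_moment:
  fixes lam :: "'i::finite \<Rightarrow> real"
  assumes lam_pos: "\<And>i. lam i > 0"
  shows "integrable (gauss_diag lam) (\<lambda>x. (x i)\<^sup>2)" "(\<integral>x. (x i)\<^sup>2 \<partial>gauss_diag lam) = lam i"
proof -
  have m: "(\<lambda>x::'i\<Rightarrow>real. x i) \<in> measurable (gauss_diag lam) borel" by simp
  have "integrable lborel (\<lambda>t. normal_density 0 (sqrt (lam i)) t * t\<^sup>2)"
    using integrable_normal_moment[where \<mu>=0 and \<sigma>="sqrt (lam i)" and k=2] lam_pos[of i] by simp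
  then have "integrable (density lborel (normal_density 0 (sqrt (lam i)))) (\<lambda>t. t\<^sup>2)"
    by (subst integrable_density) auto
  then have "integrable (distr (gauss_diag lam) borel (\<lambda>x. x i)) (\<lambda>t. t\<^sup>2)"
    by (simp add: distr_gauss_diag_component[OF lam_pos])
  then show "integrable (gauss_diag lam) (\<lambda>x. (x i)\<^sup>2)"
    by (subst (asm) integrable_distr_eq[OF m]) auto
  have "(\<integral>x. (x i)\<^sup>2 \<partial>gauss_diag lam) = (\<integral>t. t\<^sup>2 \<partial>distr (gauss_diag lam) borel (\<lambda>x. x i))"
    by (rule integral_distr[symmetric, OF m]) simp
  also have "\<dots> = (\<integral>t. t\<^sup>2 \<partial>density lborel (normal_density 0 (sqrt (lam i))))"
    by (simp add: distr_gauss_diag_component[OF lam_pos])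
  also have "\<dots> = (\<integral>t. normal_density 0 (sqrt (lam i)) t * (t - 0)^(2*1) \<partial>lborel)"
    by (subst integral_density) auto
  also have "\<dots> = lam i"
    using lam_pos[of i] integral_normal_moment_even[where \<mu>=0 and \<sigma>="sqrt (lam i)" and k=1] by simp
  finally show "(\<integral>x. (x i)\<^sup>2 \<partial>gauss_diag lam) = lam i" .
qed

lemma emeasure_gauss_diag_singleton:
  fixes lam :: "'i::finite \<Rightarrow> real"
  assumes lam_pos: "\<And>i. lam i > 0"
  shows "emeasure (gauss_diag lam) {x} = 0"
proof -
  interpret P: product_sigma_finite "\<lambda>i. density lborel (normal_density 0 (sqrt (lam i)))"
    unfolding product_sigma_finite_def
    using prob_space_normal_density lam_pos prob_space_imp_sigma_finite by (metis real_sqrt_gt_0_iff)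
  have "{x i} \<in> null_sets (density lborel (normal_density 0 (sqrt (lam i))))" for i
  proof (subst null_sets_density_iff)
    have "AE y in lborel. y \<in> {x i} \<longrightarrow> normal_density 0 (sqrt (lam i)) y = 0"
      using AE_lborel_singleton[of "x i"] by eventually_elim auto
    then show "{x i} \<in> sets lborel \<and> (AE y in lborel. y \<in> {x i} \<longrightarrow> ennreal (normal_density 0 (sqrt (lam i)) y) = 0)"
      by auto
  qed simp
  then have "emeasure (density lborel (normal_density 0 (sqrt (lam i)))) {x i} = 0" for i
    by auto
  moreover have "{x} = PiE UNIV (\<lambda>i. {x i})" by (auto simp: PiE_iff)
  ultimately show ?thesis
    unfolding gauss_diag_def by (simp add: P.emeasure_PiM)
qed

section \<open>Couplings of a law on \<open>\<real>\<^sup>n\<close> with itself\<close>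

definition couplings :: "('i::finite \<Rightarrow> real) measure \<Rightarrow> (('i \<Rightarrow> real) \<times> ('i \<Rightarrow> real)) measure set"
  where "couplings P = {J. sets J = sets (vec_space \<Otimes>\<^sub>M vec_space) \<and> prob_space J
           \<and> distr J vec_space fst = P \<and> distr J vec_space snd = P}"

lemma mutual_info_joint_coupling:
  "J \<in> couplings P \<Longrightarrow> mutual_info_joint vec_space vec_space J = rel_entropy2 J (P \<Otimes>\<^sub>M P)"
  by (simp add: mutual_info_joint_def couplings_def)

lemma coupling_gauss_diag_moments:
  fixes lam :: "'i::finite \<Rightarrow> real"
  assumes lam_pos: "\<And>i. lam i > 0" and J: "J \<in> couplings (gauss_diag lam)"
  shows "integrable J (\<lambda>p. (fst p i)\<^sup>2)" "(\<integral>p. (fst p i)\<^sup>2 \<partial>J) = lam i"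
    "integrable J (\<lambda>p. (snd p i)\<^sup>2)" "(\<integral>p. (snd p i)\<^sup>2 \<partial>J) = lam i"
    "integrable J (\<lambda>p. (fst p i - snd p i)\<^sup>2)"
proof -
  have [measurable_cong]: "sets J = sets (vec_space \<Otimes>\<^sub>M vec_space)"
    and fst_law: "distr J vec_space fst = gauss_diag lam"
    and snd_law: "distr J vec_space snd = gauss_diag lam"
    using J by (auto simp: couplings_def)
  have f: "fst \<in> measurable J vec_space" and s: "snd \<in> measurable J vec_space" by auto
  note moment = gauss_diag_second_moment[of lam i, OF lam_pos]
  show fst_int: "integrable J (\<lambda>p. (fst p i)\<^sup>2)"
    using moment(1) unfolding fst_law[symmetric] by (subst (asm) integrable_distr_eq[OF f]) auto
  show "(\<integral>p. (fst p i)\<^sup>2 \<partial>J) = lam i"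
    using moment(2) unfolding fst_law[symmetric] by (subst (asm) integral_distr[OF f]) auto
  show snd_int: "integrable J (\<lambda>p. (snd p i)\<^sup>2)"
    using moment(1) unfolding snd_law[symmetric] by (subst (asm) integrable_distr_eq[OF s]) auto
  show "(\<integral>p. (snd p i)\<^sup>2 \<partial>J) = lam i"
    using moment(2) unfolding snd_law[symmetric] by (subst (asm) integral_distr[OF s]) auto
  have bound: "(a - b)\<^sup>2 \<le> 2 * a\<^sup>2 + 2 * b\<^sup>2" for a b :: real
  proof -
    have "2 * a\<^sup>2 + 2 * b\<^sup>2 - (a - b)\<^sup>2 = (a + b)\<^sup>2" by (simp add: power2_eq_square algebra_simps)
    then show ?thesis using zero_le_power2[of "a + b"] by linarith
  qed
  have dominated: "AE p in J. norm ((fst p i - snd p i)\<^sup>2) \<le> norm (2 * (fst p i)\<^sup>2 + 2 * (snd p i)\<^sup>2)"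
  proof (intro AE_I2)
    fix p :: "('i \<Rightarrow> real) \<times> ('i \<Rightarrow> real)"
    show "norm ((fst p i - snd p i)\<^sup>2) \<le> norm (2 * (fst p i)\<^sup>2 + 2 * (snd p i)\<^sup>2)"
      using bound[of "fst p i" "snd p i"] by simp
  qed
  have "integrable J (\<lambda>p. 2 * (fst p i)\<^sup>2 + 2 * (snd p i)\<^sup>2)" using fst_int snd_int by simp
  moreover have "(\<lambda>p. (fst p i - snd p i)\<^sup>2) \<in> borel_measurable J" by measurable
  ultimately show "integrable J (\<lambda>p. (fst p i - snd p i)\<^sup>2)"
    using dominated by (rule Bochner_Integration.integrable_bound)
qed

lemma sq_distortion_coupling_gauss_diag:
  fixes lam :: "'i::finite \<Rightarrow> real"
  assumes lam_pos: "\<And>i. lam i > 0" and J: "J \<in> couplings (gauss_diag lam)"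
  shows "sq_distortion J = ennreal (\<Sum>i\<in>UNIV. \<integral>p. (fst p i - snd p i)\<^sup>2 \<partial>J)"
proof -
  note diff_int = coupling_gauss_diag_moments(5)[OF lam_pos J]
  have "sq_distortion J = ennreal (\<integral>p. (\<Sum>i\<in>UNIV. (fst p i - snd p i)\<^sup>2) \<partial>J)"
    unfolding sq_distortion_def
    by (rule nn_integral_eq_integral) (use diff_int in \<open>auto intro!: sum_nonneg\<close>)
  also have "(\<integral>p. (\<Sum>i\<in>UNIV. (fst p i - snd p i)\<^sup>2) \<partial>J) = (\<Sum>i\<in>UNIV. \<integral>p. (fst p i - snd p i)\<^sup>2 \<partial>J)"
    by (rule Bochner_Integration.integral_sum) (use diff_int in auto)
  finally show ?thesis .
qed

lemma diagonal_in_sets_vec_space[measurable]: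
  "{p::('i::finite \<Rightarrow> real) \<times> ('i \<Rightarrow> real). fst p = snd p} \<in> sets (vec_space \<Otimes>\<^sub>M vec_space)"
proof -
  have "{p::('i \<Rightarrow> real) \<times> ('i \<Rightarrow> real). fst p = snd p}
      = (\<Inter>i\<in>UNIV. {p \<in> space (vec_space \<Otimes>\<^sub>M vec_space). fst p i = snd p i})"
    by (auto simp: space_pair_measure fun_eq_iff)
  also have "\<dots> \<in> sets (vec_space \<Otimes>\<^sub>M vec_space)" by (intro sets.finite_INT) auto
  finally show ?thesis .
qed

lemma diagonal_null_gauss_diag:
  fixes lam :: "'i::finite \<Rightarrow> real"
  assumes lam_pos: "\<And>i. lam i > 0"
  shows "{p. fst p = snd p} \<in> null_sets (gauss_diag lam \<Otimes>\<^sub>M gauss_diag lam)"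
proof -
  interpret PX: prob_space "gauss_diag lam" by (rule prob_space_gauss_diag) (rule lam_pos)
  have "emeasure (gauss_diag lam \<Otimes>\<^sub>M gauss_diag lam) {p. fst p = snd p}
      = (\<integral>\<^sup>+x. emeasure (gauss_diag lam) (Pair x -` {p. fst p = snd p}) \<partial>gauss_diag lam)"
    by (rule PX.emeasure_pair_measure_alt) simp
  also have "\<dots> = 0"
    by (simp add: vimage_def emeasure_gauss_diag_singleton[OF lam_pos] eq_commute)
  finally show ?thesis by (auto intro: null_setsI)
qed

lemma mutual_info_joint_zero_distortion:
  fixes lam :: "'i::finite \<Rightarrow> real"
  assumes lam_pos: "\<And>i. lam i > 0" and J: "J \<in> couplings (gauss_diag lam)"
    and zero: "sq_distortion J \<le> 0"
  shows "mutual_info_joint vec_space vec_space J = \<infinity>"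
proof -
  have [measurable_cong]: "sets J = sets (vec_space \<Otimes>\<^sub>M vec_space)" using J by (simp add: couplings_def)
  interpret J: prob_space J using J by (simp add: couplings_def)
  have "AE p in J. ennreal (\<Sum>i\<in>UNIV. (fst p i - snd p i)\<^sup>2) = 0"
    using zero unfolding sq_distortion_def le_zero_eq by (subst (asm) nn_integral_0_iff_AE) auto
  then have on_diagonal: "AE p in J. fst p = snd p"
  proof eventually_elim
    case (elim p)
    then have "(\<Sum>i\<in>UNIV. (fst p i - snd p i)\<^sup>2) = 0" by (simp add: sum_nonneg)
    then show ?case by (simp add: sum_nonneg_eq_0_iff fun_eq_iff)
  qed
  have "\<not> absolutely_continuous (gauss_diag lam \<Otimes>\<^sub>M gauss_diag lam) J"
  proof
    assume "absolutely_continuous (gauss_diag lam \<Otimes>\<^sub>M gauss_diag lam) J"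
    then have "{p. fst p = snd p} \<in> null_sets J"
      using diagonal_null_gauss_diag[of lam, OF lam_pos] unfolding absolutely_continuous_def by auto
    then have "AE p in J. p \<notin> {p. fst p = snd p}" by (rule AE_not_in)
    with on_diagonal have "AE p in J. False" by eventually_elim auto
    then show False by (simp add: J.AE_False)
  qed
  then show ?thesis
    unfolding mutual_info_joint_coupling[OF J] rel_entropy2_def by simp
qed

section \<open>Gibbs' inequality\<close>

lemma nn_integral_divide_RN_deriv_le:
  fixes g :: "'b \<Rightarrow> real"
  assumes Q: "sigma_finite_measure Q" and sJ: "sets J = sets Q" and ac: "absolutely_continuous Q J"
    and g[measurable]: "g \<in> borel_measurable Q" and g_pos: "\<And>z. 0 < g z"
  shows "(\<integral>\<^sup>+z. ennreal (g z / enn2real (RN_deriv Q J z)) \<partial>J) \<le> (\<integral>\<^sup>+z. ennreal (g z) \<partial>Q)"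
proof -
  interpret Q: sigma_finite_measure Q by fact
  note sJ[measurable_cong]
  let ?h = "RN_deriv Q J"
  have "?h z * ennreal (g z / enn2real (?h z)) \<le> ennreal (g z)" for z
  proof (cases "?h z = \<infinity> \<or> ?h z = 0")
    case False
    define r where "r = enn2real (?h z)"
    from False have "?h z = ennreal r" "0 < r"
      by (auto simp: r_def less_top enn2real_positive_iff zero_less_iff_neq_zero)
    then show ?thesis using g_pos[of z] by (simp add: ennreal_mult[symmetric])
  qed auto
  then have "(\<integral>\<^sup>+z. ?h z * ennreal (g z / enn2real (?h z)) \<partial>Q) \<le> (\<integral>\<^sup>+z. ennreal (g z) \<partial>Q)"
    by (intro nn_integral_mono)
  moreover have "(\<integral>\<^sup>+z. ennreal (g z / enn2real (?h z)) \<partial>density Q ?h)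
      = (\<integral>\<^sup>+z. ?h z * ennreal (g z / enn2real (?h z)) \<partial>Q)"
    by (rule nn_integral_density) auto
  moreover have "density Q ?h = J" using Q.density_RN_deriv[OF ac sJ] by simp
  ultimately show ?thesis by simp
qed

lemma integral_divide_RN_deriv_le:
  fixes g :: "'b \<Rightarrow> real"
  assumes Q: "sigma_finite_measure Q" and sJ: "sets J = sets Q" and ac: "absolutely_continuous Q J"
    and g[measurable]: "g \<in> borel_measurable Q" and g_pos: "\<And>z. 0 < g z"
    and g_le: "(\<integral>\<^sup>+z. ennreal (g z) \<partial>Q) \<le> 1"
  defines "h \<equiv> \<lambda>z. enn2real (RN_deriv Q J z)"
  shows "integrable J (\<lambda>z. g z / h z)" "(\<integral>z. g z / h z \<partial>J) \<le> 1"
proof -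
  note sJ[measurable_cong]
  have ratio_nn: "0 \<le> g z / h z" for z using g_pos[of z] by (simp add: h_def)
  have ratio_nn_int: "(\<integral>\<^sup>+z. ennreal (g z / h z) \<partial>J) \<le> 1"
    using nn_integral_divide_RN_deriv_le[OF Q sJ ac g g_pos] g_le unfolding h_def by simp
  show ratio_int: "integrable J (\<lambda>z. g z / h z)"
  proof (rule integrableI_bounded)
    have "(\<integral>\<^sup>+z. ennreal (norm (g z / h z)) \<partial>J) = (\<integral>\<^sup>+z. ennreal (g z / h z) \<partial>J)"
      by (intro nn_integral_cong) (simp only: real_norm_def abs_of_nonneg[OF ratio_nn])
    also have "\<dots> < \<infinity>" using ratio_nn_int by (rule order.strict_trans1) simp
    finally show "(\<integral>\<^sup>+z. ennreal (norm (g z / h z)) \<partial>J) < \<infinity>" .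
  qed (simp add: h_def)
  have "ennreal (\<integral>z. g z / h z \<partial>J) = (\<integral>\<^sup>+z. ennreal (g z / h z) \<partial>J)"
    by (rule nn_integral_eq_integral[symmetric]) (use ratio_int ratio_nn in auto)
  with ratio_nn_int have "ennreal (\<integral>z. g z / h z \<partial>J) \<le> 1" by simp
  then show "(\<integral>z. g z / h z \<partial>J) \<le> 1" using ennreal_le_1 by blast
qed

lemma integral_log_le_KL_divergence:
  fixes g :: "'b \<Rightarrow> real"
  assumes Q: "sigma_finite_measure Q" and J: "prob_space J" and sJ: "sets J = sets Q"
    and ac: "absolutely_continuous Q J"
    and ed: "integrable J (entropy_density 2 Q J)"
    and g[measurable]: "g \<in> borel_measurable Q" and g_pos: "\<And>z. 0 < g z"
    and g_le: "(\<integral>\<^sup>+z. ennreal (g z) \<partial>Q) \<le> 1"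
    and log_g: "integrable J (\<lambda>z. log 2 (g z))"
  shows "(\<integral>z. log 2 (g z) \<partial>J) \<le> KL_divergence 2 Q J"
proof -
  interpret Q: sigma_finite_measure Q by fact
  interpret J: prob_space J by fact
  note sJ[measurable_cong]
  define RN where "RN = RN_deriv Q J"
  define h where "h z = enn2real (RN z)" for z
  have h_pos: "AE z in J. 0 < h z"
  proof -
    have J_density: "J = density Q RN" unfolding RN_def using Q.density_RN_deriv[OF ac sJ] by simp
    have "AE z in density Q RN. RN z \<noteq> 0" by (subst AE_density) (auto simp: RN_def)
    then have "AE z in J. RN z \<noteq> 0" unfolding J_density[symmetric] .
    moreover have "AE z in J. RN z \<noteq> \<infinity>"
      unfolding RN_def
      using absolutely_continuous_AE[OF sJ ac Q.RN_deriv_finite[OF prob_space_imp_sigma_finite[OF J] ac sJ]] .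
    ultimately show ?thesis
      by eventually_elim (auto simp: h_def enn2real_positive_iff less_top zero_less_iff_neq_zero)
  qed
  have KL: "KL_divergence 2 Q J = (\<integral>z. log 2 (h z) \<partial>J)" and log_h: "integrable J (\<lambda>z. log 2 (h z))"
    using ed unfolding KL_divergence_def entropy_density_def h_def RN_def comp_def by auto
  have ratio_int: "integrable J (\<lambda>z. g z / h z)" and ratio_le: "(\<integral>z. g z / h z \<partial>J) \<le> 1"
    using integral_divide_RN_deriv_le[OF Q sJ ac g g_pos g_le] unfolding h_def RN_def by auto
  \<comment> \<open>\<open>ln r \<le> r - 1\<close> applied to the ratio \<open>r = g / h\<close>\<close>
  have "(\<integral>z. log 2 (g z) \<partial>J) - (\<integral>z. log 2 (h z) \<partial>J) = (\<integral>z. log 2 (g z) - log 2 (h z) \<partial>J)"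
    using log_g log_h by (rule Bochner_Integration.integral_diff[symmetric])
  also have "\<dots> \<le> (\<integral>z. (g z / h z - 1) / ln 2 \<partial>J)"
  proof (rule integral_mono_AE)
    show "AE z in J. log 2 (g z) - log 2 (h z) \<le> (g z / h z - 1) / ln 2"
      using h_pos
    proof eventually_elim
      case (elim z)
      then have "log 2 (g z) - log 2 (h z) = ln (g z / h z) / ln 2"
        using g_pos[of z] by (simp add: log_def ln_div diff_divide_distrib)
      also have "\<dots> \<le> (g z / h z - 1) / ln 2"
        using elim g_pos[of z] by (intro divide_right_mono ln_le_minus_one) auto
      finally show ?case .
    qed
  qed (use log_g log_h ratio_int in auto)
  also have "\<dots> = ((\<integral>z. g z / h z \<partial>J) - 1) / ln 2"
    using ratio_int by (simp add: J.prob_space)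
  also have "\<dots> \<le> 0"
    using ratio_le by (simp add: divide_nonpos_pos)
  finally show ?thesis unfolding KL by simp
qed

lemma rel_entropy2_ge_integral_log:
  fixes g :: "'b \<Rightarrow> real"
  assumes "sigma_finite_measure Q" "prob_space J" "sets J = sets Q"
    and "g \<in> borel_measurable Q" "\<And>z. 0 < g z" "(\<integral>\<^sup>+z. ennreal (g z) \<partial>Q) \<le> 1"
    and "integrable J (\<lambda>z. log 2 (g z))"
  shows "ennreal (\<integral>z. log 2 (g z) \<partial>J) \<le> rel_entropy2 J Q"
  using integral_log_le_KL_divergence[OF assms(1-3) _ _ assms(4-)]
  by (auto simp: rel_entropy2_def ennreal_leI)

lemma rel_entropy2_density:
  fixes g :: "'b \<Rightarrow> real"
  assumes Q: "sigma_finite_measure Q" and g[measurable]: "g \<in> borel_measurable Q"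
    and g_pos: "\<And>z. 0 < g z"
    and log_g: "integrable (density Q (\<lambda>z. ennreal (g z))) (\<lambda>z. log 2 (g z))"
  shows "rel_entropy2 (density Q (\<lambda>z. ennreal (g z))) Q
       = ennreal (\<integral>z. log 2 (g z) \<partial>density Q (\<lambda>z. ennreal (g z)))"
proof -
  interpret Q: sigma_finite_measure Q by fact
  let ?J = "density Q (\<lambda>z. ennreal (g z))"
  have ac: "absolutely_continuous Q ?J" by (rule absolutely_continuousI_density) simp
  have "density Q (RN_deriv Q ?J) = ?J" by (rule density_RN_deriv_density) simp
  then have "AE z in Q. RN_deriv Q ?J z = ennreal (g z)"
    by (intro Q.density_unique) auto
  then have "AE z in ?J. RN_deriv Q ?J z = ennreal (g z)"
    by (rule absolutely_continuous_AE[OF sets_density ac])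
  then have ae: "AE z in ?J. entropy_density 2 Q ?J z = log 2 (g z)"
    by eventually_elim (use g_pos in \<open>auto simp: entropy_density_def less_imp_le\<close>)
  have "integrable ?J (entropy_density 2 Q ?J)"
    using log_g by (rule integrable_cong_AE_imp) (use ae in \<open>auto simp: eq_commute\<close>)
  moreover have "KL_divergence 2 Q ?J = (\<integral>z. log 2 (g z) \<partial>?J)"
    unfolding KL_divergence_def by (rule integral_cong_AE) (use ae in auto)
  ultimately show ?thesis unfolding rel_entropy2_def using ac by simp
qed

section \<open>The Gaussian test channel\<close>

lemma distr_pair_kernel:
  assumes A: "sigma_finite_measure A" and B: "sigma_finite_measure B" and C: "sigma_finite_measure C"
    and h[measurable]: "(\<lambda>(x,u). h x u) \<in> measurable (A \<Otimes>\<^sub>M B) C"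
    and G[measurable]: "(\<lambda>(x,y). G x y) \<in> borel_measurable (A \<Otimes>\<^sub>M C)"
    and K: "\<And>x. x \<in> space A \<Longrightarrow> distr B C (h x) = density C (G x)"
  shows "distr (A \<Otimes>\<^sub>M B) (A \<Otimes>\<^sub>M C) (\<lambda>(x,u). (x, h x u)) = density (A \<Otimes>\<^sub>M C) (\<lambda>(x,y). G x y)"
proof (rule measure_eqI)
  interpret A: sigma_finite_measure A by fact
  interpret B: sigma_finite_measure B by fact
  interpret C: sigma_finite_measure C by fact
  fix S assume "S \<in> sets (distr (A \<Otimes>\<^sub>M B) (A \<Otimes>\<^sub>M C) (\<lambda>(x,u). (x, h x u)))"
  then have S[measurable]: "S \<in> sets (A \<Otimes>\<^sub>M C)" by simp
  have [measurable]: "x \<in> space A \<Longrightarrow> h x \<in> measurable B C" for x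
    using measurable_Pair2[OF h] by simp
  have "emeasure (distr (A \<Otimes>\<^sub>M B) (A \<Otimes>\<^sub>M C) (\<lambda>(x,u). (x, h x u))) S
      = (\<integral>\<^sup>+p. indicator S (fst p, h (fst p) (snd p)) \<partial>(A \<Otimes>\<^sub>M B))"
    by (subst nn_integral_indicator[symmetric], simp, subst nn_integral_distr) (auto simp: case_prod_beta)
  also have "\<dots> = (\<integral>\<^sup>+x. \<integral>\<^sup>+u. indicator S (x, h x u) \<partial>B \<partial>A)"
    by (subst B.nn_integral_fst[symmetric]) auto
  also have "\<dots> = (\<integral>\<^sup>+x. \<integral>\<^sup>+y. indicator S (x, y) \<partial>distr B C (h x) \<partial>A)"
    by (intro nn_integral_cong, subst nn_integral_distr) auto
  also have "\<dots> = (\<integral>\<^sup>+x. \<integral>\<^sup>+y. G x y * indicator S (x, y) \<partial>C \<partial>A)"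
    by (intro nn_integral_cong) (simp add: K nn_integral_density)
  also have "\<dots> = (\<integral>\<^sup>+p. (\<lambda>(x,y). G x y) p * indicator S p \<partial>(A \<Otimes>\<^sub>M C))"
    by (subst C.nn_integral_fst[symmetric]) auto
  also have "\<dots> = emeasure (density (A \<Otimes>\<^sub>M C) (\<lambda>(x,y). G x y)) S"
    by (simp add: emeasure_density)
  finally show "emeasure (distr (A \<Otimes>\<^sub>M B) (A \<Otimes>\<^sub>M C) (\<lambda>(x,u). (x, h x u))) S
      = emeasure (density (A \<Otimes>\<^sub>M C) (\<lambda>(x,y). G x y)) S" .
qed simp

text \<open>The log-likelihood ratio of \<open>N(\<rho> x, (1 - \<rho>\<^sup>2) l)\<close> against \<open>N(0, l)\<close> at \<open>y\<close>, written
  symmetrically so that \<open>x\<close> and \<open>y\<close> interact only through \<open>(x - y)\<^sup>2\<close>.\<close>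

definition channel_log_density :: "real \<Rightarrow> real \<Rightarrow> real \<Rightarrow> real \<Rightarrow> real" where
  "channel_log_density \<rho> l x y = - ln (sqrt (1 - \<rho>\<^sup>2)) + (\<rho> - \<rho>\<^sup>2) / (2 * (1 - \<rho>\<^sup>2) * l) * (x\<^sup>2 + y\<^sup>2)
      - \<rho> / (2 * (1 - \<rho>\<^sup>2) * l) * (x - y)\<^sup>2"

definition channel_density :: "('i::finite \<Rightarrow> real) \<Rightarrow> ('i \<Rightarrow> real) \<Rightarrow> ('i \<Rightarrow> real) \<Rightarrow> ('i \<Rightarrow> real) \<Rightarrow> real"
  where "channel_density lam \<rho> x y = (\<Prod>i\<in>UNIV. exp (channel_log_density (\<rho> i) (lam i) (x i) (y i)))"

definition channel_coupling :: "('i::finite \<Rightarrow> real) \<Rightarrow> ('i \<Rightarrow> real) \<Rightarrow> (('i \<Rightarrow> real) \<times> ('i \<Rightarrow> real)) measure"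
  where "channel_coupling lam \<rho> = density (gauss_diag lam \<Otimes>\<^sub>M gauss_diag lam)
           (\<lambda>p. ennreal (channel_density lam \<rho> (fst p) (snd p)))"

lemma channel_density_pos: "channel_density lam \<rho> x y > 0"
  by (simp add: channel_density_def prod_pos)

lemma channel_density_sym: "channel_density lam \<rho> x y = channel_density lam \<rho> y x"
  unfolding channel_density_def channel_log_density_def by (simp add: add.commute power2_commute)

lemma log_channel_density:
  "log 2 (channel_density lam \<rho> x y) = (\<Sum>i\<in>UNIV. channel_log_density (\<rho> i) (lam i) (x i) (y i)) / ln 2"
  by (simp add: channel_density_def exp_sum[symmetric] log_def)

lemma measurable_channel_density[measurable]:
  "(\<lambda>p. channel_density lam \<rho> (fst p) (snd p)) \<in> borel_measurable (vec_space \<Otimes>\<^sub>M vec_space)"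
  "(\<lambda>p. channel_density lam \<rho> (snd p) (fst p)) \<in> borel_measurable (vec_space \<Otimes>\<^sub>M vec_space)"
  "(\<lambda>y. channel_density lam \<rho> x y) \<in> borel_measurable (vec_space :: ('i::finite \<Rightarrow> real) measure)"
  unfolding channel_density_def channel_log_density_def by measurable

lemma exp_channel_log_density_normal_density:
  assumes \<rho>: "\<bar>\<rho>\<bar> < 1" and l: "l > 0"
  shows "exp (channel_log_density \<rho> l x y) * normal_density 0 (sqrt l) y
       = normal_density (\<rho> * x) (sqrt (1 - \<rho>\<^sup>2) * sqrt l) y"
proof -
  define c where "c = 1 - \<rho>\<^sup>2"
  have c: "0 < c" using \<rho> by (simp add: c_def abs_square_less_1)
  have var: "(sqrt c * sqrt l)\<^sup>2 = c * l" using c l by (simp add: power_mult_distrib)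
  have square: "(\<rho> - \<rho>\<^sup>2) * (x\<^sup>2 + y\<^sup>2) - \<rho> * (x - y)\<^sup>2 - c * y\<^sup>2 = - (y - \<rho> * x)\<^sup>2"
    unfolding c_def by (simp add: power2_eq_square algebra_simps)
  have "channel_log_density \<rho> l x y + - (y\<^sup>2 / (2 * l))
      = ((\<rho> - \<rho>\<^sup>2) * (x\<^sup>2 + y\<^sup>2) - \<rho> * (x - y)\<^sup>2 - c * y\<^sup>2) / (2 * c * l) - ln (sqrt c)"
    using c l unfolding channel_log_density_def c_def[symmetric] by (simp add: field_simps)
  also have "\<dots> = - (y - \<rho> * x)\<^sup>2 / (2 * (c * l)) - ln (sqrt c)"
    unfolding square by (simp add: mult.assoc)
  finally have exponent: "channel_log_density \<rho> l x y + - (y\<^sup>2 / (2 * l))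
      = - (y - \<rho> * x)\<^sup>2 / (2 * (c * l)) - ln (sqrt c)" .
  have "exp (channel_log_density \<rho> l x y) * normal_density 0 (sqrt l) y
      = exp (channel_log_density \<rho> l x y) * exp (- (y\<^sup>2 / (2 * l))) / sqrt (2 * pi * l)"
    using l by (simp add: normal_density_def)
  also have "\<dots> = exp (- (y - \<rho> * x)\<^sup>2 / (2 * (c * l))) / sqrt c / sqrt (2 * pi * l)"
    using c by (simp only: exp_add[symmetric] exponent exp_diff exp_ln real_sqrt_gt_zero)
  also have "\<dots> = normal_density (\<rho> * x) (sqrt c * sqrt l) y"
    unfolding normal_density_def var using c l by (simp add: real_sqrt_mult)
  finally show ?thesis unfolding c_def .
qed
lemma distr_gauss_channel:
  fixes lam \<rho> x :: "'i::finite \<Rightarrow> real"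
  assumes lam_pos: "\<And>i. lam i > 0" and \<rho>: "\<And>i. \<bar>\<rho> i\<bar> < 1"
  shows "distr (gauss_diag (\<lambda>_. 1)) vec_space (\<lambda>u i. \<rho> i * x i + sqrt (1 - (\<rho> i)\<^sup>2) * sqrt (lam i) * u i)
       = density (gauss_diag lam) (\<lambda>y. ennreal (channel_density lam \<rho> x y))"
proof -
  let ?n = "\<lambda>i. normal_density (\<rho> i * x i) (sqrt (1 - (\<rho> i)\<^sup>2) * sqrt (lam i))"
  have b: "0 < sqrt (1 - (\<rho> i)\<^sup>2) * sqrt (lam i)" for i
    using \<rho>[of i] lam_pos[of i] by (simp add: abs_square_less_1)
  have "distr (gauss_diag (\<lambda>_. 1)) vec_space (\<lambda>u i. \<rho> i * x i + sqrt (1 - (\<rho> i)\<^sup>2) * sqrt (lam i) * u i)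
      = PiM UNIV (\<lambda>i. density lborel (?n i))"
    by (rule distr_gauss_diag_affine) (rule b)
  also have "\<dots> = density (PiM UNIV (\<lambda>_. lborel)) (\<lambda>y. \<Prod>i\<in>UNIV. ennreal (?n i (y i)))"
    by (rule PiM_density_lborel) (auto intro!: prob_space_normal_density simp: b)
  also have "\<dots> = density (PiM UNIV (\<lambda>_. lborel))
      (\<lambda>y. (\<Prod>i\<in>UNIV. ennreal (normal_density 0 (sqrt (lam i)) (y i))) * ennreal (channel_density lam \<rho> x y))"
  proof (intro density_cong refl AE_I2)
    fix y :: "'i \<Rightarrow> real"
    have "(\<Prod>i\<in>UNIV. ennreal (?n i (y i)))
        = ennreal (\<Prod>i\<in>UNIV. exp (channel_log_density (\<rho> i) (lam i) (x i) (y i)) * normal_density 0 (sqrt (lam i)) (y i))"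
      by (simp add: exp_channel_log_density_normal_density \<rho> lam_pos prod_ennreal)
    then show "(\<Prod>i\<in>UNIV. ennreal (?n i (y i)))
        = (\<Prod>i\<in>UNIV. ennreal (normal_density 0 (sqrt (lam i)) (y i))) * ennreal (channel_density lam \<rho> x y)"
      by (simp add: channel_density_def prod.distrib prod_ennreal ennreal_mult' prod_nonneg mult.commute)
  qed (auto simp: channel_density_def channel_log_density_def)
  also have "\<dots> = density (gauss_diag lam) (\<lambda>y. ennreal (channel_density lam \<rho> x y))"
    by (subst gauss_diag_density[OF lam_pos], subst density_density_eq) auto
  finally show ?thesis .
qed

lemma nn_integral_channel_density:
  fixes lam \<rho> :: "'i::finite \<Rightarrow> real"
  assumes lam_pos: "\<And>i. lam i > 0" and \<rho>: "\<And>i. \<bar>\<rho> i\<bar> < 1"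
  shows "(\<integral>\<^sup>+ y. ennreal (channel_density lam \<rho> x y) \<partial>gauss_diag lam) = 1"
proof -
  interpret PU: prob_space "gauss_diag (\<lambda>_::'i. 1)" by (rule prob_space_gauss_diag) simp
  have [measurable]: "UNIV \<in> sets (vec_space :: ('i \<Rightarrow> real) measure)"
    by (metis sets.top space_vec_space)
  have "(\<integral>\<^sup>+ y. ennreal (channel_density lam \<rho> x y) \<partial>gauss_diag lam)
      = emeasure (density (gauss_diag lam) (\<lambda>y. ennreal (channel_density lam \<rho> x y))) UNIV"
    by (subst emeasure_density) auto
  also have "\<dots> = 1"
    unfolding distr_gauss_channel[OF lam_pos \<rho>, symmetric]
    by (subst emeasure_distr) (auto intro!: measurable_PiM_single' simp: PU.emeasure_space_1[simplified])
  finally show ?thesis .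
qed

lemma channel_coupling_total:
  fixes lam \<rho> :: "'i::finite \<Rightarrow> real"
  assumes lam_pos: "\<And>i. lam i > 0" and \<rho>: "\<And>i. \<bar>\<rho> i\<bar> < 1"
  shows "(\<integral>\<^sup>+ p. ennreal (channel_density lam \<rho> (fst p) (snd p)) \<partial>(gauss_diag lam \<Otimes>\<^sub>M gauss_diag lam)) = 1"
proof -
  interpret PX: prob_space "gauss_diag lam" by (rule prob_space_gauss_diag) (rule lam_pos)
  have "(\<integral>\<^sup>+ p. ennreal (channel_density lam \<rho> (fst p) (snd p)) \<partial>(gauss_diag lam \<Otimes>\<^sub>M gauss_diag lam))
      = (\<integral>\<^sup>+ x. \<integral>\<^sup>+ y. ennreal (channel_density lam \<rho> x y) \<partial>gauss_diag lam \<partial>gauss_diag lam)"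
    by (subst PX.nn_integral_fst[symmetric]) auto
  then show ?thesis
    using PX.emeasure_space_1 by (simp add: nn_integral_channel_density[OF lam_pos \<rho>])
qed

lemma sigma_finite_gauss_diag_pair:
  fixes lam :: "'i::finite \<Rightarrow> real"
  assumes "\<And>i. lam i > 0"
  shows "sigma_finite_measure (gauss_diag lam \<Otimes>\<^sub>M gauss_diag lam)"
proof -
  interpret PX: prob_space "gauss_diag lam" using prob_space_gauss_diag assms .
  interpret P: pair_sigma_finite "gauss_diag lam" "gauss_diag lam" ..
  show ?thesis by unfold_locales
qed

lemma sets_channel_coupling[measurable_cong, simp]:
  "sets (channel_coupling lam \<rho>) = sets (vec_space \<Otimes>\<^sub>M vec_space :: (('i::finite \<Rightarrow> real) \<times> ('i \<Rightarrow> real)) measure)"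
  by (simp add: channel_coupling_def)

lemma emeasure_distr_channel_coupling:
  fixes lam \<rho> :: "'i::finite \<Rightarrow> real"
  assumes f[measurable]: "f \<in> measurable (vec_space \<Otimes>\<^sub>M vec_space) vec_space"
    and B[measurable]: "B \<in> sets vec_space"
  shows "emeasure (distr (channel_coupling lam \<rho>) vec_space f) B
       = (\<integral>\<^sup>+ p. ennreal (channel_density lam \<rho> (fst p) (snd p)) * indicator B (f p) \<partial>(gauss_diag lam \<Otimes>\<^sub>M gauss_diag lam))"
proof -
  from measurable_sets[OF f B] have [measurable]: "f -` B \<in> sets (vec_space \<Otimes>\<^sub>M vec_space)"
    by (simp add: space_pair_measure)
  have "emeasure (distr (channel_coupling lam \<rho>) vec_space f) B = emeasure (channel_coupling lam \<rho>) (f -` B)"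
    by (subst emeasure_distr) (simp_all add: channel_coupling_def space_pair_measure)
  then show ?thesis
    unfolding channel_coupling_def
    by (subst (asm) emeasure_density) (auto intro!: nn_integral_cong split: split_indicator)
qed

lemma distr_fst_channel_coupling:
  fixes lam \<rho> :: "'i::finite \<Rightarrow> real"
  assumes lam_pos: "\<And>i. lam i > 0" and \<rho>: "\<And>i. \<bar>\<rho> i\<bar> < 1"
  shows "distr (channel_coupling lam \<rho>) vec_space fst = gauss_diag lam"
proof (rule measure_eqI)
  interpret PX: prob_space "gauss_diag lam" by (rule prob_space_gauss_diag) (rule lam_pos)
  fix B assume "B \<in> sets (distr (channel_coupling lam \<rho>) vec_space fst)"
  then have [measurable]: "B \<in> sets vec_space" by simp
  have "emeasure (distr (channel_coupling lam \<rho>) vec_space fst) B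
      = (\<integral>\<^sup>+ x. \<integral>\<^sup>+ y. ennreal (channel_density lam \<rho> x y) * indicator B x \<partial>gauss_diag lam \<partial>gauss_diag lam)"
    by (simp add: emeasure_distr_channel_coupling, subst PX.nn_integral_fst[symmetric]) auto
  then show "emeasure (distr (channel_coupling lam \<rho>) vec_space fst) B = emeasure (gauss_diag lam) B"
    by (simp add: nn_integral_multc nn_integral_channel_density[OF lam_pos \<rho>])
qed simp

lemma distr_snd_channel_coupling:
  fixes lam \<rho> :: "'i::finite \<Rightarrow> real"
  assumes lam_pos: "\<And>i. lam i > 0" and \<rho>: "\<And>i. \<bar>\<rho> i\<bar> < 1"
  shows "distr (channel_coupling lam \<rho>) vec_space snd = gauss_diag lam"
proof (rule measure_eqI)
  interpret PX: prob_space "gauss_diag lam" by (rule prob_space_gauss_diag) (rule lam_pos)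
  interpret P: pair_sigma_finite "gauss_diag lam" "gauss_diag lam" ..
  fix B assume "B \<in> sets (distr (channel_coupling lam \<rho>) vec_space snd)"
  then have [measurable]: "B \<in> sets vec_space" by simp
  have "emeasure (distr (channel_coupling lam \<rho>) vec_space snd) B
      = (\<integral>\<^sup>+ p. ennreal (channel_density lam \<rho> (snd p) (fst p)) * indicator B (snd p) \<partial>(gauss_diag lam \<Otimes>\<^sub>M gauss_diag lam))"
    by (simp add: emeasure_distr_channel_coupling) (metis channel_density_sym)
  also have "\<dots> = (\<integral>\<^sup>+ y. \<integral>\<^sup>+ x. ennreal (channel_density lam \<rho> y x) * indicator B y \<partial>gauss_diag lam \<partial>gauss_diag lam)"
    by (subst P.nn_integral_snd[symmetric]) auto
  finally show "emeasure (distr (channel_coupling lam \<rho>) vec_space snd) B = emeasure (gauss_diag lam) B"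
    by (simp add: nn_integral_multc nn_integral_channel_density[OF lam_pos \<rho>])
qed simp

lemma channel_coupling_in_couplings:
  fixes lam \<rho> :: "'i::finite \<Rightarrow> real"
  assumes lam_pos: "\<And>i. lam i > 0" and \<rho>: "\<And>i. \<bar>\<rho> i\<bar> < 1"
  shows "channel_coupling lam \<rho> \<in> couplings (gauss_diag lam)"
proof -
  have "sets (gauss_diag lam \<Otimes>\<^sub>M gauss_diag lam) = sets (vec_space \<Otimes>\<^sub>M vec_space)"
    by (intro sets_pair_measure_cong) simp_all
  then have [measurable]: "space (gauss_diag lam \<Otimes>\<^sub>M gauss_diag lam) \<in> sets (vec_space \<Otimes>\<^sub>M vec_space)"
    by (metis sets.top)
  have "emeasure (channel_coupling lam \<rho>) (space (channel_coupling lam \<rho>))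
      = (\<integral>\<^sup>+ p. ennreal (channel_density lam \<rho> (fst p) (snd p)) \<partial>(gauss_diag lam \<Otimes>\<^sub>M gauss_diag lam))"
    unfolding channel_coupling_def by (subst emeasure_density) (auto intro!: nn_integral_cong)
  then have "prob_space (channel_coupling lam \<rho>)"
    by (intro prob_spaceI) (simp add: channel_coupling_total[OF lam_pos \<rho>])
  then show ?thesis
    by (simp add: couplings_def distr_fst_channel_coupling[OF lam_pos \<rho>] distr_snd_channel_coupling[OF lam_pos \<rho>])
qed

lemma distr_test_channel:
  fixes X U :: "'a \<Rightarrow> 'i::finite \<Rightarrow> real" and lam \<rho> :: "'i \<Rightarrow> real"
  assumes "prob_space M"
    and lam_pos: "\<And>i. lam i > 0" and \<rho>: "\<And>i. \<bar>\<rho> i\<bar> < 1"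
    and X_meas[measurable]: "X \<in> measurable M vec_space"
    and U_meas[measurable]: "U \<in> measurable M vec_space"
    and X_law: "distr M vec_space X = gauss_diag lam"
    and U_law: "distr M vec_space U = gauss_diag (\<lambda>_. 1)"
    and indep: "prob_space.indep_var M vec_space X vec_space U"
  shows "distr M (vec_space \<Otimes>\<^sub>M vec_space)
           (\<lambda>\<omega>. (X \<omega>, \<lambda>i. \<rho> i * X \<omega> i + sqrt (1 - (\<rho> i)\<^sup>2) * sqrt (lam i) * U \<omega> i))
       = channel_coupling lam \<rho>"
proof -
  interpret prob_space M by fact
  have sf: "sigma_finite_measure (gauss_diag lam')" if "\<And>i. lam' i > 0" for lam' :: "'i \<Rightarrow> real"
    using prob_space_gauss_diag[OF that] by (rule prob_space_imp_sigma_finite)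
  define b where "b i = sqrt (1 - (\<rho> i)\<^sup>2) * sqrt (lam i)" for i
  let ?T = "\<lambda>(x, u). (x::'i\<Rightarrow>real, \<lambda>i. \<rho> i * x i + b i * u i)"
  have XU: "distr M (vec_space \<Otimes>\<^sub>M vec_space) (\<lambda>\<omega>. (X \<omega>, U \<omega>)) = gauss_diag lam \<Otimes>\<^sub>M gauss_diag (\<lambda>_. 1)"
    using indep unfolding indep_var_distribution_eq X_law U_law by simp
  have "distr M (vec_space \<Otimes>\<^sub>M vec_space)
           (\<lambda>\<omega>. (X \<omega>, \<lambda>i. \<rho> i * X \<omega> i + sqrt (1 - (\<rho> i)\<^sup>2) * sqrt (lam i) * U \<omega> i))
      = distr (gauss_diag lam \<Otimes>\<^sub>M gauss_diag (\<lambda>_. 1)) (gauss_diag lam \<Otimes>\<^sub>M gauss_diag lam) ?T"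
    unfolding XU[symmetric] by (subst distr_distr) (auto simp: comp_def b_def intro!: distr_cong)
  also have "\<dots> = channel_coupling lam \<rho>"
    unfolding channel_coupling_def case_prod_beta'[symmetric, of "\<lambda>x y. ennreal (channel_density lam \<rho> x y)"]
  proof (rule distr_pair_kernel)
    fix x :: "'i \<Rightarrow> real"
    show "distr (gauss_diag (\<lambda>_. 1)) (gauss_diag lam) (\<lambda>u i. \<rho> i * x i + b i * u i)
        = density (gauss_diag lam) (\<lambda>y. ennreal (channel_density lam \<rho> x y))"
      using distr_gauss_channel[OF lam_pos \<rho>, where x=x] unfolding b_def
      by (subst distr_cong[of _ _ _ vec_space]) auto
  qed (auto simp: lam_pos intro!: sf)
  finally show ?thesis .
qed

section \<open>Optimality of the test channel\<close>

lemma integral_log_channel_density: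
  fixes lam \<rho> :: "'i::finite \<Rightarrow> real"
  assumes lam_pos: "\<And>i. lam i > 0" and J: "J \<in> couplings (gauss_diag lam)"
    and slope: "\<And>i. \<rho> i / (2 * (1 - (\<rho> i)\<^sup>2) * lam i) = t"
  defines "C \<equiv> (\<Sum>i\<in>UNIV. - ln (sqrt (1 - (\<rho> i)\<^sup>2)) + (\<rho> i - (\<rho> i)\<^sup>2) / (2 * (1 - (\<rho> i)\<^sup>2) * lam i) * (2 * lam i))"
  shows "integrable J (\<lambda>p. log 2 (channel_density lam \<rho> (fst p) (snd p)))"
    "(\<integral>p. log 2 (channel_density lam \<rho> (fst p) (snd p)) \<partial>J)
       = (C - t * (\<Sum>i\<in>UNIV. \<integral>p. (fst p i - snd p i)\<^sup>2 \<partial>J)) / ln 2"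
proof -
  define a where "a i = (\<rho> i - (\<rho> i)\<^sup>2) / (2 * (1 - (\<rho> i)\<^sup>2) * lam i)" for i
  let ?f = "\<lambda>i p. - ln (sqrt (1 - (\<rho> i)\<^sup>2)) + a i * (fst p i)\<^sup>2 + a i * (snd p i)\<^sup>2 - t * (fst p i - snd p i)\<^sup>2"
  have "channel_log_density (\<rho> i) (lam i) (fst p i) (snd p i) = ?f i p" for i p
    unfolding channel_log_density_def a_def slope[of i, symmetric] distrib_left by (simp only: add.assoc)
  then have log_eq: "log 2 (channel_density lam \<rho> (fst p) (snd p)) = (\<Sum>i\<in>UNIV. ?f i p) / ln 2" for p
    by (simp add: log_channel_density)
  note moments = coupling_gauss_diag_moments[OF lam_pos J]
  interpret J: prob_space J using J by (simp add: couplings_def)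
  have int_f: "integrable J (?f i)" for i using moments by auto
  show "integrable J (\<lambda>p. log 2 (channel_density lam \<rho> (fst p) (snd p)))"
    unfolding log_eq using int_f by simp
  have "(\<integral>p. (\<Sum>i\<in>UNIV. ?f i p) \<partial>J) = (\<Sum>i\<in>UNIV. \<integral>p. ?f i p \<partial>J)"
    using int_f by (rule Bochner_Integration.integral_sum)
  also have "\<dots> = (\<Sum>i\<in>UNIV. - ln (sqrt (1 - (\<rho> i)\<^sup>2)) + a i * (2 * lam i) - t * (\<integral>p. (fst p i - snd p i)\<^sup>2 \<partial>J))"
  proof (rule sum.cong[OF refl])
    fix i
    show "(\<integral>p. ?f i p \<partial>J) = - ln (sqrt (1 - (\<rho> i)\<^sup>2)) + a i * (2 * lam i) - t * (\<integral>p. (fst p i - snd p i)\<^sup>2 \<partial>J)"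
      using moments[of i] J.prob_space
      by (simp add: Bochner_Integration.integral_diff Bochner_Integration.integral_add algebra_simps)
  qed
  also have "\<dots> = C - t * (\<Sum>i\<in>UNIV. \<integral>p. (fst p i - snd p i)\<^sup>2 \<partial>J)"
    unfolding C_def a_def by (simp add: sum_subtractf sum_distrib_left)
  finally show "(\<integral>p. log 2 (channel_density lam \<rho> (fst p) (snd p)) \<partial>J)
       = (C - t * (\<Sum>i\<in>UNIV. \<integral>p. (fst p i - snd p i)\<^sup>2 \<partial>J)) / ln 2"
    unfolding log_eq by simp
qed

lemma channel_coupling_minimises_mutual_info:
  fixes lam \<rho> :: "'i::finite \<Rightarrow> real"
  assumes lam_pos: "\<And>i. lam i > 0" and \<rho>: "\<And>i. \<bar>\<rho> i\<bar> < 1"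
    and slope: "\<And>i. \<rho> i / (2 * (1 - (\<rho> i)\<^sup>2) * lam i) = t" and "t \<ge> 0"
    and J: "J \<in> couplings (gauss_diag lam)"
    and distortion: "sq_distortion J \<le> sq_distortion (channel_coupling lam \<rho>)"
  shows "mutual_info_joint vec_space vec_space (channel_coupling lam \<rho>) \<le> mutual_info_joint vec_space vec_space J"
proof -
  let ?Q = "gauss_diag lam \<Otimes>\<^sub>M gauss_diag lam"
  let ?G = "\<lambda>p. channel_density lam \<rho> (fst p) (snd p)"
  let ?Jc = "channel_coupling lam \<rho>"
  let ?e = "\<lambda>J. \<Sum>i\<in>UNIV. \<integral>p. (fst p i - snd p i)\<^sup>2 \<partial>J"
  have Jc: "?Jc \<in> couplings (gauss_diag lam)" by (rule channel_coupling_in_couplings[OF lam_pos \<rho>])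
  note sfQ = sigma_finite_gauss_diag_pair[of lam, OF lam_pos]
  note log_G = integral_log_channel_density[OF lam_pos _ slope]
  have "0 \<le> ?e ?Jc" by (intro sum_nonneg integral_nonneg_AE) auto
  then have "?e J \<le> ?e ?Jc"
    using distortion sq_distortion_coupling_gauss_diag[of lam, OF lam_pos J]
      sq_distortion_coupling_gauss_diag[of lam, OF lam_pos Jc]
    by simp
  then have log_G_le: "(\<integral>p. log 2 (?G p) \<partial>?Jc) \<le> (\<integral>p. log 2 (?G p) \<partial>J)"
    unfolding log_G(2)[OF J] log_G(2)[OF Jc] using \<open>t \<ge> 0\<close>
    by (intro divide_right_mono) (auto intro: mult_left_mono)
  have "mutual_info_joint vec_space vec_space ?Jc = ennreal (\<integral>p. log 2 (?G p) \<partial>?Jc)"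
    unfolding mutual_info_joint_coupling[OF Jc] using log_G(1)[OF Jc]
    by (simp add: channel_coupling_def rel_entropy2_density[OF sfQ] channel_density_pos)
  also have "\<dots> \<le> ennreal (\<integral>p. log 2 (?G p) \<partial>J)" using log_G_le by (rule ennreal_leI)
  also have "\<dots> \<le> mutual_info_joint vec_space vec_space J"
  proof -
    have "sets ?Q = sets (vec_space \<Otimes>\<^sub>M vec_space)" by (intro sets_pair_measure_cong) simp_all
    then have "prob_space J" "sets J = sets ?Q" using J by (simp_all add: couplings_def)
    moreover have "?G \<in> borel_measurable ?Q" by measurable
    ultimately show ?thesis unfolding mutual_info_joint_coupling[OF J]
      by (rule rel_entropy2_ge_integral_log[OF sfQ _ _ _ channel_density_pos _ log_G(1)[OF J]])
         (simp add: channel_coupling_total[OF lam_pos \<rho>])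
  qed
  finally show ?thesis .
qed

lemma reverse_waterfilling_coefficient:
  fixes l \<theta> :: real
  assumes l: "l > 0" and \<theta>: "\<theta> > 0"
  defines "a \<equiv> (sqrt (l\<^sup>2 + \<theta>\<^sup>2) - \<theta>) / l"
  shows "\<bar>a\<bar> < 1" "a / (2 * (1 - a\<^sup>2) * l) = 1 / (4 * \<theta>)"
proof -
  define s where "s = sqrt (l\<^sup>2 + \<theta>\<^sup>2)"
  have s2: "s\<^sup>2 = l\<^sup>2 + \<theta>\<^sup>2" and s0: "s \<ge> 0" unfolding s_def by simp_all
  have "\<theta>\<^sup>2 < s\<^sup>2" "s\<^sup>2 < (l + \<theta>)\<^sup>2" using s2 l \<theta> by (simp_all add: power2_eq_square algebra_simps)
  then have bounds: "\<theta> < s" "s < l + \<theta>" using s0 l \<theta> by (auto intro: power_less_imp_less_base)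
  have al: "a * l = s - \<theta>" unfolding a_def s_def using l by simp
  have a_pos: "0 < a" using al bounds(1) l by (metis diff_gt_0_iff_gt zero_less_mult_pos2)
  moreover have "a < 1" using al bounds(2) l by (smt (verit) mult_less_cancel_right2)
  ultimately show "\<bar>a\<bar> < 1" by simp
  \<comment> \<open>\<open>a l = s - \<theta>\<close> is the positive root of \<open>z\<^sup>2 + 2 \<theta> z = l\<^sup>2\<close>\<close>
  have "(a * l)\<^sup>2 + 2 * \<theta> * (a * l) = l\<^sup>2"
    unfolding al using s2 by (simp add: power2_eq_square algebra_simps)
  then have "2 * (1 - a\<^sup>2) * l * l = 4 * \<theta> * a * l"
    by (simp add: power2_eq_square algebra_simps)
  then have "2 * (1 - a\<^sup>2) * l = 4 * \<theta> * a" using l by simp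
  then show "a / (2 * (1 - a\<^sup>2) * l) = 1 / (4 * \<theta>)" using a_pos \<theta> by simp
qed

lemma test_channel_coupling_optimal:
  fixes X U Z :: "'a \<Rightarrow> 'i::finite \<Rightarrow> real" and lam \<alpha> :: "'i \<Rightarrow> real"
  assumes "prob_space M"
    and lam_pos: "\<And>i. lam i > 0"
    and "\<theta> \<ge> 0"
    and X_meas[measurable]: "X \<in> measurable M vec_space"
    and U_meas[measurable]: "U \<in> measurable M vec_space"
    and X_law: "distr M vec_space X = gauss_diag lam"
    and "distr M vec_space U = gauss_diag (\<lambda>_. 1)"
    and "prob_space.indep_var M vec_space X vec_space U"
    and \<alpha>_def: "\<alpha> = (\<lambda>i. (sqrt ((lam i)\<^sup>2 + \<theta>\<^sup>2) - \<theta>) / lam i)"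
    and Z_def: "Z = (\<lambda>\<omega>. (\<lambda>i. \<alpha> i * X \<omega> i + sqrt (1 - (\<alpha> i)\<^sup>2) * sqrt (lam i) * U \<omega> i))"
  defines "J\<^sub>Z \<equiv> distr M (vec_space \<Otimes>\<^sub>M vec_space) (\<lambda>\<omega>. (X \<omega>, Z \<omega>))"
  shows "J\<^sub>Z \<in> couplings (gauss_diag lam) \<and> (\<forall>J \<in> couplings (gauss_diag lam).
           sq_distortion J \<le> sq_distortion J\<^sub>Z \<longrightarrow>
           mutual_info_joint vec_space vec_space J\<^sub>Z \<le> mutual_info_joint vec_space vec_space J)"
proof (cases "\<theta> = 0")
  case True
  interpret prob_space M by fact
  have "\<alpha> i = 1" for i using True lam_pos[of i] by (simp add: \<alpha>_def)
  then have "Z = X" by (simp add: Z_def)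
  then have "J\<^sub>Z \<in> couplings (gauss_diag lam)" "sq_distortion J\<^sub>Z \<le> 0"
    using X_law by (auto intro!: prob_space_distr simp: J\<^sub>Z_def couplings_def distr_distr comp_def
        sq_distortion_def nn_integral_distr)
  then show ?thesis using mutual_info_joint_zero_distortion[of lam, OF lam_pos] by auto
next
  case False
  with \<open>\<theta> \<ge> 0\<close> have "\<theta> > 0" by simp
  then have \<alpha>_bound: "\<bar>\<alpha> i\<bar> < 1" and \<alpha>_slope: "\<alpha> i / (2 * (1 - (\<alpha> i)\<^sup>2) * lam i) = 1 / (4 * \<theta>)" for i
    using reverse_waterfilling_coefficient[OF lam_pos[of i]] by (simp_all add: \<alpha>_def)
  have "J\<^sub>Z = channel_coupling lam \<alpha>"
    unfolding J\<^sub>Z_def Z_def by (rule distr_test_channel[where lam=lam and \<rho>=\<alpha>]) (use assms \<alpha>_bound in auto)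
  then show ?thesis
    using channel_coupling_in_couplings[where lam=lam and \<rho>=\<alpha>, OF lam_pos \<alpha>_bound] \<open>\<theta> > 0\<close>
      channel_coupling_minimises_mutual_info[where lam=lam and \<rho>=\<alpha>, OF lam_pos \<alpha>_bound \<alpha>_slope]
    by simp
qed

theorem mainTheorem3:
  fixes M :: "'a measure"
    and X U :: "'a \<Rightarrow> ('i::finite \<Rightarrow> real)"
    and lam :: "'i \<Rightarrow> real"
    and \<theta> :: real
  assumes "prob_space M"
    and lam_pos: "\<And>i. lam i > 0"
    and "\<theta> \<ge> 0"
    and X_meas: "X \<in> measurable M vec_space"
    and U_meas: "U \<in> measurable M vec_space"
    and X_law: "distr M vec_space X = gauss_diag lam"
    and U_law: "distr M vec_space U = gauss_diag (\<lambda>_. 1)"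
    and indep: "prob_space.indep_var M vec_space X vec_space U"
  shows
    "let \<alpha> = (\<lambda>i. (sqrt ((lam i)\<^sup>2 + \<theta>\<^sup>2) - \<theta>) / lam i);
         Z = (\<lambda>\<omega>. (\<lambda>i. \<alpha> i * X \<omega> i + sqrt (1 - (\<alpha> i)\<^sup>2) * sqrt (lam i) * U \<omega> i));
         Xhat = Z;
         D = (\<integral>\<^sup>+ \<omega>. ennreal (\<Sum>i\<in>UNIV. (X \<omega> i - Xhat \<omega> i)\<^sup>2) \<partial>M);
         PX = distr M vec_space X
     in distr M vec_space Xhat = PX \<and>
        mutual_info_joint vec_space vec_space
            (distr M (vec_space \<Otimes>\<^sub>M vec_space) (\<lambda>\<omega>. (X \<omega>, Xhat \<omega>)))
        = (\<Sqinter>J \<in> {J. sets J = sets (vec_space \<Otimes>\<^sub>M vec_space) \<and> prob_space J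
                      \<and> distr J vec_space fst = PX \<and> distr J vec_space snd = PX
                      \<and> sq_distortion J \<le> D}.
             mutual_info_joint vec_space vec_space J)"
proof -
  interpret prob_space M by fact
  note [measurable] = X_meas U_meas
  define \<alpha> where "\<alpha> = (\<lambda>i. (sqrt ((lam i)\<^sup>2 + \<theta>\<^sup>2) - \<theta>) / lam i)"
  define Z where "Z = (\<lambda>\<omega>. (\<lambda>i. \<alpha> i * X \<omega> i + sqrt (1 - (\<alpha> i)\<^sup>2) * sqrt (lam i) * U \<omega> i))"
  let ?J = "distr M (vec_space \<Otimes>\<^sub>M vec_space) (\<lambda>\<omega>. (X \<omega>, Z \<omega>))"
  let ?I = "mutual_info_joint vec_space vec_space"
  note optimal = test_channel_coupling_optimal[OF assms \<alpha>_def Z_def]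
  have [measurable]: "Z \<in> measurable M vec_space"
    unfolding Z_def by (intro measurable_PiM_single') auto
  have "distr M vec_space Z = distr ?J vec_space snd"
    by (simp add: distr_distr comp_def)
  then have Z_law: "distr M vec_space Z = gauss_diag lam"
    using optimal by (simp add: couplings_def)
  have "(\<integral>\<^sup>+ \<omega>. ennreal (\<Sum>i\<in>UNIV. (X \<omega> i - Z \<omega> i)\<^sup>2) \<partial>M) = sq_distortion ?J"
    unfolding sq_distortion_def by (simp add: nn_integral_distr)
  moreover have "?I ?J = (\<Sqinter>J \<in> {J \<in> couplings (gauss_diag lam). sq_distortion J \<le> sq_distortion ?J}. ?I J)"
    using optimal by (intro antisym INF_greatest INF_lower) auto
  ultimately have "distr M vec_space Z = distr M vec_space X \<and>
      ?I ?J = (\<Sqinter>J \<in> {J. sets J = sets (vec_space \<Otimes>\<^sub>M vec_space) \<and> prob_space J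
                \<and> distr J vec_space fst = distr M vec_space X \<and> distr J vec_space snd = distr M vec_space X
                \<and> sq_distortion J \<le> (\<integral>\<^sup>+ \<omega>. ennreal (\<Sum>i\<in>UNIV. (X \<omega> i - Z \<omega> i)\<^sup>2) \<partial>M)}. ?I J)"
    using Z_law X_law by (simp add: couplings_def conj_assoc)
  then show ?thesis unfolding Let_def by (simp only: Z_def \<alpha>_def)
qed

end
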